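(* Let $c_m=\binom{2m+1}{m}$ for $m\ge0$. For $n\ge1$ let $P_n(x)$ be the determinant of the $(n+1)\times(n+1)$ matrix with first row $(1,x,x^2,\dots,x^n)$ and row $i+1$ equal to $(c_{i-1},c_i,\dots,c_{i-1+n})$ for $i=1,\dots,n$, and let $P^{(1)}_n(x)$ be the determinant of the $(n+1)\times(n+1)$ matrix with first row $(1,x,\dots,x^n)$ and row $i+1$ equal to $(c_i,c_{i+1},\dots,c_{i+n})$ for $i=1,\dots,n$. Set $t_n(x)=(-1)^nP_n(x)$ and $t^{(1)}_n(x)=\frac{(-1)^n}{2n+1}P^{(1)}_n(x)$. Then for all $n\ge1$: $t_n(4)=1$ and $t^{(1)}_n(4)=\frac{n+1}{2n+1}$. *)

theory Defs
  imports Complex_Main "Jordan_Normal_Form.Determinant"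
begin

definition c :: "nat \<Rightarrow> real" where
  "c m = real ((2*m+1) choose m)"

definition hmat :: "nat \<Rightarrow> nat \<Rightarrow> real \<Rightarrow> real mat" where
  "hmat s n x = mat (n+1) (n+1) (\<lambda>(i,j). if i = 0 then x ^ j else c (i - 1 + s + j))"

definition P :: "nat \<Rightarrow> real \<Rightarrow> real" where
  "P n x = det (hmat 0 n x)"

definition P1 :: "nat \<Rightarrow> real \<Rightarrow> real" where
  "P1 n x = det (hmat 1 n x)"

definition t :: "nat \<Rightarrow> real \<Rightarrow> real" where
  "t n x = (-1)^n * P n x"

definition t1 :: "nat \<Rightarrow> real \<Rightarrow> real" where
  "t1 n x = (-1)^n / real (2*n+1) * P1 n x"

end

theory Submission
  imports Defs
begin

text \<open>Let \<open>b i k = C(2i+1, i-k)\<close> for \<open>k \<le> i\<close> and \<open>0\<close> otherwise. A Vandermonde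
  convolution, split in half by the symmetry \<open>r \<mapsto> 2i+1-r\<close>, gives
  \<open>c (i+j) = \<Sum>k. b i k * b j k\<close>, and \<open>\<Sum>k. b j k = 4^j\<close>. Hence at \<open>x = 4\<close> both
  matrices factor as \<open>L * B\<^sup>T\<close> with \<open>B = (b i k)\<close> unitriangular and \<open>L\<close> consisting of a
  row of ones above rows \<open>0..n-1\<close> (for \<open>P\<close>) or rows \<open>1..n\<close> (for \<open>P1\<close>) of \<open>B\<close>.
  In the first case expansion along the last column gives \<open>(-1)^n\<close>. In the second,
  the vector \<open>(-1)^k (2k+1)\<close> is orthogonal to the rows \<open>1..n\<close> of \<open>B\<close> (an alternating
  binomial sum, halved by the same symmetry) and pairs with the row of ones to
  \<open>(-1)^n (n+1)\<close>; using it as first column of a unitriangular matrix gives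
  \<open>det L = (-1)^n (n+1)\<close>.\<close>

lemma sum_atMost_odd_symmetric:
  fixes f :: "nat \<Rightarrow> 'a::comm_semiring_1"
  assumes "\<And>r. r \<le> m \<Longrightarrow> f (2*m+1-r) = f r"
  shows "(\<Sum>r\<le>2*m+1. f r) = 2 * (\<Sum>r\<le>m. f r)"
proof -
  have "2*m+1 = m + Suc m" by simp
  then have "(\<Sum>r\<le>2*m+1. f r) = (\<Sum>r\<le>m. f r) + (\<Sum>r=Suc m..m+Suc m. f r)"
    by (simp only: sum_up_index_split)
  also have "(\<Sum>r=Suc m..m+Suc m. f r) = (\<Sum>r\<le>m. f (2*m+1-r))"
    by (rule sum.reindex_bij_witness[where i="\<lambda>r. 2*m+1-r" and j="\<lambda>r. 2*m+1-r"]) auto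
  also have "\<dots> = (\<Sum>r\<le>m. f r)"
    using assms by simp
  finally show ?thesis
    by (simp add: mult_2)
qed

lemma central_binomial_Suc: "(2*m+2) choose (m+1) = 2 * ((2*m+1) choose m)"
proof -
  have "(2*m+1) choose (m+1) = (2*m+1) choose m"
    using binomial_symmetric[of m "2*m+1"] by simp
  then show ?thesis
    by (simp add: numeral_2_eq_2)
qed

lemma sum_choose_odd_product:
  assumes "i \<le> j"
  shows "(\<Sum>k\<le>i. ((2*i+1) choose (i-k)) * ((2*j+1) choose (j-k))) = (2*(i+j)+1) choose (i+j)"
proof -
  define f where "f r = ((2*i+1) choose r) * ((2*j+1) choose (i+j+1-r))" for r
  have "2 * ((2*(i+j)+1) choose (i+j)) = (2*i+1 + (2*j+1)) choose (i+j+1)"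
    using central_binomial_Suc[of "i+j"] by (simp add: algebra_simps)
  also have "\<dots> = (\<Sum>r\<le>i+j+1. f r)"
    unfolding f_def by (rule vandermonde[symmetric])
  also have "\<dots> = (\<Sum>r\<le>2*i+1. f r)"
    using assms by (intro sum.mono_neutral_right) (auto simp: f_def)
  also have "\<dots> = 2 * (\<Sum>r\<le>i. f r)"
  proof (rule sum_atMost_odd_symmetric)
    fix r assume "r \<le> i"
    have "(2*i+1) choose (2*i+1-r) = (2*i+1) choose r"
      by (rule binomial_symmetric[symmetric]) (use \<open>r \<le> i\<close> in simp)
    moreover have "i+j+1-(2*i+1-r) = 2*j+1 - (i+j+1-r)"
      using \<open>r \<le> i\<close> assms by simp
    moreover have "(2*j+1) choose (2*j+1 - (i+j+1-r)) = (2*j+1) choose (i+j+1-r)"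
      by (rule binomial_symmetric[symmetric]) (use assms in simp)
    ultimately show "f (2*i+1-r) = f r"
      by (simp only: f_def)
  qed
  also have "(\<Sum>r\<le>i. f r) = (\<Sum>k\<le>i. ((2*i+1) choose (i-k)) * ((2*j+1) choose (j-k)))"
  proof -
    have "(\<Sum>r\<le>i. f r) = (\<Sum>k\<le>i. f (i-k))"
      using sum.atLeastAtMost_rev[of f 0 i] by (simp add: atLeast0AtMost)
    also have "\<dots> = (\<Sum>k\<le>i. ((2*i+1) choose (i-k)) * ((2*j+1) choose (j-k)))"
    proof (rule sum.cong)
      fix k assume "k \<in> {..i}"
      then have "i+j+1-(i-k) = 2*j+1 - (j-k)"
        using assms by simp
      moreover have "(2*j+1) choose (2*j+1 - (j-k)) = (2*j+1) choose (j-k)"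
        by (rule binomial_symmetric[symmetric]) simp
      ultimately show "f (i-k) = ((2*i+1) choose (i-k)) * ((2*j+1) choose (j-k))"
        by (simp only: f_def)
    qed simp
    finally show ?thesis .
  qed
  finally show ?thesis by simp
qed

lemma sum_alternating_odd_choose:
  assumes "i \<ge> 1"
  shows "(\<Sum>k\<le>i. (-1)^k * (2 * of_nat k + 1) * of_nat ((2*i+1) choose (i-k))) = (0 :: 'a::{idom,ring_char_0})"
proof -
  define g :: "nat \<Rightarrow> 'a" where
    "g r = (-1)^r * (of_nat (2*i+1) - 2 * of_nat r) * of_nat ((2*i+1) choose r)" for r
  have "2 * (\<Sum>r\<le>i. g r) = (\<Sum>r\<le>2*i+1. g r)"
  proof (rule sum_atMost_odd_symmetric[symmetric])
    fix r assume r: "r \<le> i"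
    have "(2*i+1) choose (2*i+1-r) = (2*i+1) choose r"
      by (rule binomial_symmetric[symmetric]) (use r in simp)
    moreover have "(-1::'a)^(2*i+1-r) = - ((-1)^r)"
      using r by (simp add: minus_one_power_iff)
    moreover have "of_nat (2*i+1-r) = (of_nat (2*i+1) - of_nat r :: 'a)"
      using r by simp
    ultimately show "g (2*i+1-r) = g r"
      unfolding g_def by (simp only:) (simp add: algebra_simps)
  qed
  also have "\<dots> = of_nat (2*i+1) * (\<Sum>r\<le>2*i+1. (-1)^r * of_nat ((2*i+1) choose r))
                   - 2 * (\<Sum>r\<le>2*i+1. (-1)^r * of_nat r * of_nat ((2*i+1) choose r))"
    by (simp add: g_def sum_subtractf sum_distrib_left algebra_simps)
  also have "\<dots> = 0"
  proof -
    have "(\<Sum>r\<le>2*i+1. (-1)^r * of_nat ((2*i+1) choose r)) = (0::'a)"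
      by (rule choose_alternating_sum) simp
    moreover have "(\<Sum>r\<le>2*i+1. (-1)^r * of_nat r * of_nat ((2*i+1) choose r)) = (0::'a)"
      by (rule choose_alternating_linear_sum) (use assms in simp)
    ultimately show ?thesis
      by (simp only:) simp
  qed
  finally have "(\<Sum>r\<le>i. g r) = 0"
    by simp
  moreover have "(\<Sum>k\<le>i. (-1)^k * (2 * of_nat k + 1) * of_nat ((2*i+1) choose (i-k)))
      = (-1)^i * (\<Sum>r\<le>i. g r)"
  proof -
    have "(\<Sum>k\<le>i. (-1)^k * (2 * of_nat k + 1) * of_nat ((2*i+1) choose (i-k)))
        = (\<Sum>r\<le>i. (-1)^(i-r) * (2 * of_nat (i-r) + 1) * (of_nat ((2*i+1) choose r) :: 'a))"
      using sum.atLeastAtMost_rev[of "\<lambda>k. (-1)^k * (2 * of_nat k + 1) * of_nat ((2*i+1) choose (i-k)) :: 'a" 0 i]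
      by (simp add: atLeast0AtMost)
    also have "\<dots> = (\<Sum>r\<le>i. (-1)^i * g r)"
    proof (rule sum.cong)
      fix r assume "r \<in> {..i}"
      then have r: "r \<le> i" by simp
      have "(-1::'a)^(i-r) = (-1)^i * (-1)^r"
        using r by (simp add: minus_one_power_iff)
      moreover have "of_nat (i-r) = (of_nat i - of_nat r :: 'a)"
        using r by simp
      ultimately show "(-1)^(i-r) * (2 * of_nat (i-r) + 1) * (of_nat ((2*i+1) choose r) :: 'a) = (-1)^i * g r"
        unfolding g_def by (simp only:) (simp add: algebra_simps)
    qed simp
    finally show ?thesis
      by (simp add: sum_distrib_left)
  qed
  ultimately show ?thesis
    by simp
qed

lemma sum_alternating_odd: "(\<Sum>k\<le>n. (-1)^k * (2 * of_nat k + 1)) = ((-1)^n * (of_nat n + 1) :: 'a::comm_ring_1)"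
  by (induction n) (simp_all add: algebra_simps)

lemma det_lower_unitriangular:
  fixes A :: "'a::comm_ring_1 mat"
  assumes "A \<in> carrier_mat n n"
    and "\<And>i j. i < j \<Longrightarrow> j < n \<Longrightarrow> A $$ (i,j) = 0"
    and "\<And>i. i < n \<Longrightarrow> A $$ (i,i) = 1"
  shows "det A = 1"
proof -
  have "det A = prod_list (diag_mat A)"
    using assms(1,2) by (rule det_lower_triangular[rotated])
  also have "\<dots> = 1"
    using assms(1,3) by (simp add: prod_list_diag_prod)
  finally show ?thesis .
qed

lemma det_single_entry_col:
  fixes A :: "'a::comm_ring_1 mat"
  assumes "A \<in> carrier_mat n n" "i < n" "j < n"
    and "\<And>i'. i' < n \<Longrightarrow> i' \<noteq> i \<Longrightarrow> A $$ (i',j) = 0"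
  shows "det A = A $$ (i,j) * cofactor A i j"
proof -
  have "det A = (\<Sum>i'<n. A $$ (i',j) * cofactor A i' j)"
    using assms(1,3) by (rule laplace_expansion_column)
  also have "\<dots> = (\<Sum>i'<n. if i' = i then A $$ (i,j) * cofactor A i j else 0)"
    using assms(4) by (intro sum.cong) auto
  finally show ?thesis
    using assms(2) by simp
qed

definition binom_tri :: "nat \<Rightarrow> nat \<Rightarrow> real" where
  "binom_tri i k = (if k \<le> i then real ((2*i+1) choose (i-k)) else 0)"

lemma binom_tri_diag [simp]: "binom_tri i i = 1"
  by (simp add: binom_tri_def)

lemma binom_tri_above [simp]: "i < k \<Longrightarrow> binom_tri i k = 0"
  by (simp add: binom_tri_def)

lemma sum_binom_tri_truncate:
  assumes "i \<le> n"
  shows "(\<Sum>k\<le>n. binom_tri i k * g k) = (\<Sum>k\<le>i. binom_tri i k * g k)"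
  using assms by (intro sum.mono_neutral_right) auto

lemma binom_tri_row_sum:
  assumes "i \<le> n"
  shows "(\<Sum>k\<le>n. binom_tri i k) = 4^i"
proof -
  have "(\<Sum>k\<le>n. binom_tri i k) = (\<Sum>k\<le>i. real ((2*i+1) choose (i-k)))"
    using sum_binom_tri_truncate[OF assms, of "\<lambda>_. 1"] by (simp add: binom_tri_def)
  also have "\<dots> = (\<Sum>k\<le>i. real ((2*i+1) choose k))"
    using sum.atLeastAtMost_rev[of "\<lambda>k. real ((2*i+1) choose (i-k))" 0 i]
    by (simp add: atLeast0AtMost)
  also have "\<dots> = 4^i"
    using binomial_r_part_sum[of i] by (simp flip: of_nat_sum add: power_mult)
  finally show ?thesis .
qed

lemma binom_tri_gram_le:
  assumes "i \<le> j"
  shows "(\<Sum>k\<le>i. binom_tri i k * binom_tri j k) = c (i+j)"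
proof -
  have "(\<Sum>k\<le>i. binom_tri i k * binom_tri j k)
      = real (\<Sum>k\<le>i. ((2*i+1) choose (i-k)) * ((2*j+1) choose (j-k)))"
    using assms by (simp add: binom_tri_def)
  also have "\<dots> = c (i+j)"
    unfolding c_def by (simp only: sum_choose_odd_product[OF assms])
  finally show ?thesis .
qed

lemma binom_tri_gram:
  assumes "j \<le> n"
  shows "(\<Sum>k\<le>n. binom_tri i k * binom_tri j k) = c (i+j)"
proof (cases "i \<le> j")
  case True
  then show ?thesis
    using assms sum_binom_tri_truncate[of i n] binom_tri_gram_le by simp
next
  case False
  then have "(\<Sum>k\<le>n. binom_tri i k * binom_tri j k) = (\<Sum>k\<le>j. binom_tri j k * binom_tri i k)"
    using assms sum_binom_tri_truncate[of j n] by (simp add: mult.commute)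
  then show ?thesis
    using False binom_tri_gram_le[of j i] by (simp add: add.commute)
qed

lemma binom_tri_dual:
  "(\<Sum>k\<le>i. binom_tri i k * ((-1)^k * (2 * real k + 1))) = (if i = 0 then 1 else 0)"
proof (cases "i = 0")
  case False
  then have "(\<Sum>k\<le>i. binom_tri i k * ((-1)^k * (2 * real k + 1)))
      = (\<Sum>k\<le>i. (-1)^k * (2 * real k + 1) * real ((2*i+1) choose (i-k)))"
    by (intro sum.cong) (auto simp: binom_tri_def)
  with False show ?thesis
    using sum_alternating_odd_choose[of i] by simp
qed simp

definition tri_mat :: "nat \<Rightarrow> real mat" where
  "tri_mat n = mat (n+1) (n+1) (\<lambda>(i,k). binom_tri i k)"

definition hmat_left_factor :: "nat \<Rightarrow> nat \<Rightarrow> real mat" where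
  "hmat_left_factor s n = mat (n+1) (n+1) (\<lambda>(i,k). if i = 0 then 1 else binom_tri (i-1+s) k)"

definition dual_col_mat :: "nat \<Rightarrow> real mat" where
  "dual_col_mat n = mat (n+1) (n+1)
     (\<lambda>(i,j). if j = 0 then (-1)^i * (2 * real i + 1) else if i = j then 1 else 0)"

lemma hmat_at_4_factor: "hmat s n 4 = hmat_left_factor s n * transpose_mat (tri_mat n)"
proof (rule eq_matI)
  fix i j
  assume "i < dim_row (hmat_left_factor s n * transpose_mat (tri_mat n))"
    and "j < dim_col (hmat_left_factor s n * transpose_mat (tri_mat n))"
  then have i: "i \<le> n" and j: "j \<le> n"
    by (auto simp: hmat_left_factor_def tri_mat_def)
  have "(hmat_left_factor s n * transpose_mat (tri_mat n)) $$ (i,j)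
      = (\<Sum>k\<le>n. (if i = 0 then 1 else binom_tri (i-1+s) k) * binom_tri j k)"
    using i j by (simp add: hmat_left_factor_def tri_mat_def scalar_prod_def atLeast0LessThan lessThan_Suc_atMost)
  also have "\<dots> = hmat s n 4 $$ (i,j)"
    using i j binom_tri_row_sum[OF j] binom_tri_gram[OF j] by (simp add: hmat_def)
  finally show "hmat s n 4 $$ (i,j) = (hmat_left_factor s n * transpose_mat (tri_mat n)) $$ (i,j)" ..
qed (simp_all add: hmat_def hmat_left_factor_def tri_mat_def)

lemma det_transpose_tri_mat: "det (transpose_mat (tri_mat n)) = 1"
proof -
  have "det (tri_mat n) = 1"
    by (rule det_lower_unitriangular[of _ "n+1"]) (auto simp: tri_mat_def)
  then show ?thesis
    by (subst det_transpose[of _ "n+1"]) (simp_all add: tri_mat_def)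
qed

lemma det_dual_col_mat: "det (dual_col_mat n) = 1"
  by (rule det_lower_unitriangular[of _ "n+1"]) (auto simp: dual_col_mat_def)

lemma det_hmat_left_factor_0: "det (hmat_left_factor 0 n) = (-1)^n"
proof -
  let ?L = "hmat_left_factor 0 n"
  have "det ?L = ?L $$ (0,n) * cofactor ?L 0 n"
    by (rule det_single_entry_col[of _ "n+1"]) (auto simp: hmat_left_factor_def)
  also have "det (mat_delete ?L 0 n) = 1"
    by (rule det_lower_unitriangular[of _ n]) (auto simp: mat_delete_def hmat_left_factor_def)
  then have "cofactor ?L 0 n = (-1)^n"
    by (simp add: cofactor_def)
  finally show ?thesis
    by (simp add: hmat_left_factor_def)
qed

lemma hmat_left_factor_1_times_dual_col:
  assumes "i \<le> n" "j \<le> n"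
  shows "(hmat_left_factor 1 n * dual_col_mat n) $$ (i,j)
    = (if j = 0 then (if i = 0 then (-1)^n * (real n + 1) else 0) else hmat_left_factor 1 n $$ (i,j))"
proof -
  have "(hmat_left_factor 1 n * dual_col_mat n) $$ (i,j)
      = (\<Sum>k\<le>n. hmat_left_factor 1 n $$ (i,k) * dual_col_mat n $$ (k,j))"
    using assms by (simp add: hmat_left_factor_def dual_col_mat_def scalar_prod_def atLeast0LessThan lessThan_Suc_atMost)
  also have "\<dots> = (if j = 0 then (if i = 0 then (-1)^n * (real n + 1) else 0)
                    else hmat_left_factor 1 n $$ (i,j))"
  proof (cases "j = 0")
    case True
    show ?thesis
    proof (cases "i = 0")
      case True
      then show ?thesis
        using \<open>j = 0\<close> sum_alternating_odd[of n]
        by (simp add: hmat_left_factor_def dual_col_mat_def)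
    next
      case False
      then have "(\<Sum>k\<le>n. hmat_left_factor 1 n $$ (i,k) * dual_col_mat n $$ (k,j))
          = (\<Sum>k\<le>i. binom_tri i k * ((-1)^k * (2 * real k + 1)))"
        using \<open>j = 0\<close> assms sum_binom_tri_truncate[of i n]
        by (simp add: hmat_left_factor_def dual_col_mat_def)
      with False \<open>j = 0\<close> show ?thesis
        by (simp add: binom_tri_dual)
    qed
  next
    case False
    then have "(\<Sum>k\<le>n. hmat_left_factor 1 n $$ (i,k) * dual_col_mat n $$ (k,j))
        = (\<Sum>k\<le>n. if k = j then hmat_left_factor 1 n $$ (i,j) else 0)"
      using assms by (intro sum.cong) (auto simp: dual_col_mat_def)
    with False assms show ?thesis
      by simp
  qed
  finally show ?thesis .
qed

lemma det_hmat_left_factor_1: "det (hmat_left_factor 1 n) = (-1)^n * (real n + 1)"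
proof -
  let ?L = "hmat_left_factor 1 n" and ?D = "dual_col_mat n"
  have LD: "?L * ?D \<in> carrier_mat (n+1) (n+1)"
    by (rule mult_carrier_mat[of _ _ "n+1"]) (simp_all add: hmat_left_factor_def dual_col_mat_def)
  have minor: "mat_delete (?L * ?D) 0 0 $$ (i,j) = binom_tri (Suc i) (Suc j)" if "i < n" "j < n" for i j
  proof -
    have "mat_delete (?L * ?D) 0 0 $$ (i,j) = (?L * ?D) $$ (insert_index 0 i, insert_index 0 j)"
      by (rule mat_delete_index[symmetric]) (use LD that in simp_all)
    also have "\<dots> = ?L $$ (Suc i, Suc j)"
      using hmat_left_factor_1_times_dual_col[of "Suc i" n "Suc j"] that
      by (simp add: insert_index_def del: One_nat_def)
    finally show ?thesis
      using that by (simp add: hmat_left_factor_def)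
  qed
  have "mat_delete (?L * ?D) 0 0 \<in> carrier_mat n n"
    using mat_delete_carrier[OF LD] by simp
  then have "det (mat_delete (?L * ?D) 0 0) = 1"
    by (rule det_lower_unitriangular) (simp_all add: minor del: One_nat_def)
  moreover have "det (?L * ?D) = (?L * ?D) $$ (0,0) * cofactor (?L * ?D) 0 0"
    by (rule det_single_entry_col[OF LD]) (simp_all add: hmat_left_factor_1_times_dual_col del: One_nat_def)
  ultimately have "det (?L * ?D) = (-1)^n * (real n + 1)"
    by (simp add: cofactor_def hmat_left_factor_1_times_dual_col del: One_nat_def)
  moreover have "det (?L * ?D) = det ?L * det ?D"
    by (rule det_mult[of _ "n+1"]) (simp_all add: hmat_left_factor_def dual_col_mat_def)
  ultimately show ?thesis
    by (simp add: det_dual_col_mat)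
qed

lemma P_at_4: "P n 4 = (-1)^n"
proof -
  have "P n 4 = det (hmat_left_factor 0 n) * det (transpose_mat (tri_mat n))"
    unfolding P_def hmat_at_4_factor
    by (rule det_mult[of _ "n+1"]) (simp_all add: hmat_left_factor_def tri_mat_def)
  then show ?thesis
    by (simp add: det_hmat_left_factor_0 det_transpose_tri_mat)
qed

lemma P1_at_4: "P1 n 4 = (-1)^n * (real n + 1)"
proof -
  have "P1 n 4 = det (hmat_left_factor 1 n) * det (transpose_mat (tri_mat n))"
    unfolding P1_def hmat_at_4_factor
    by (rule det_mult[of _ "n+1"]) (simp_all add: hmat_left_factor_def tri_mat_def)
  then show ?thesis
    by (simp only: det_hmat_left_factor_1 det_transpose_tri_mat mult_1_right)
qed

theorem lemma9p1:
  fixes n :: nat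
  assumes "n \<ge> 1"
  shows "t n 4 = 1 \<and> t1 n 4 = real (n+1) / real (2*n+1)"
proof
  have "(-1::real)^n * (-1)^n = 1"
    by (simp flip: power_add)
  then show "t n 4 = 1" and "t1 n 4 = real (n+1) / real (2*n+1)"
    by (simp_all add: t_def t1_def P_at_4 P1_at_4 mult.assoc[symmetric])
qed

end
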